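(* Let $T=(V,E)$ be a finite tree with positive vertex weights $(x_v)_{v\in V}$ and positive edge weights $(w_e)_{e\in E}$, and let $o,p\in V$ and $ou,pv\in E$. Then $$\frac{\partial}{\partial x_p}\mathcal R(T,o)\ \begin{cases}\geq0 & \text{if } o=p \text{ or } d_T(o,p)\text{ is odd},\\ \leq 0&\text{if } o\neq p\text{ and } d_T(o,p)\text{ is even};\end{cases}$$ $$\frac{\partial}{\partial w_{pv}}\mathcal E(T,ou)\ \begin{cases}\geq0 & \text{if } ou=pv \text{ or } d_T(ou,pv)\text{ is odd},\\ \leq 0&\text{if } ou\neq pv\text{ and } d_T(ou,pv)\text{ is even};\end{cases}$$ $$w_{pv}\frac{\partial}{\partial w_{pv}}\mathcal R(T,o)=x_o\frac{\partial}{\partial x_o}\mathcal E(T,pv)\ \begin{cases}\leq0 & \text{if } d_T(o,pv)\text{ is even},\\ \geq 0&\text{if } d_T(o,pv)\text{ is odd}.\end{cases}$$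
   Context: General monomer-dimer model on a finite graph $G=(V,E)$: the measure on matchings $D\subseteq E$ is $\mu(D)=Z_G^{-1}\prod_{e\in D}w_e\prod_{v\in\mathscr M_G(D)}x_v$, where $\mathscr M_G(D)$ is the set of vertices not covered by $D$ and $Z_G$ is the normalising sum. $\mathcal R(G,o)$ is the $\mu$-probability that $o\in\mathscr M_G(D)$, and $\mathcal E(G,ou)$ is the $\mu$-probability that $ou\in D$. $d_T(a,b)$ is the graph distance between vertices; $d_T(o,pv)=\min\{d_T(o,p),d_T(o,v)\}$ and $d_T(ou,pv)=\min\{d_T(o,pv),d_T(u,pv)\}$ (the minimum distance between an endpoint of $ou$ and an endpoint of $pv$). *)

theory Defs
  imports "HOL-Analysis.Analysis"
begin

definition simple_graph :: "'a set \<Rightarrow> 'a set set \<Rightarrow> bool" where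
  "simple_graph V E \<longleftrightarrow> finite V \<and> (\<forall>e\<in>E. \<exists>a b. a \<in> V \<and> b \<in> V \<and> a \<noteq> b \<and> e = {a, b})"

definition is_path :: "'a set \<Rightarrow> 'a set set \<Rightarrow> 'a list \<Rightarrow> bool" where
  "is_path V E xs \<longleftrightarrow> xs \<noteq> [] \<and> distinct xs \<and> set xs \<subseteq> V \<and>
     (\<forall>i. Suc i < length xs \<longrightarrow> {xs ! i, xs ! Suc i} \<in> E)"

definition is_cycle :: "'a set \<Rightarrow> 'a set set \<Rightarrow> 'a list \<Rightarrow> bool" where
  "is_cycle V E xs \<longleftrightarrow> is_path V E xs \<and> length xs \<ge> 3 \<and> {last xs, hd xs} \<in> E"

definition connected_graph :: "'a set \<Rightarrow> 'a set set \<Rightarrow> bool" where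
  "connected_graph V E \<longleftrightarrow>
     (\<forall>a\<in>V. \<forall>b\<in>V. \<exists>xs. is_path V E xs \<and> hd xs = a \<and> last xs = b)"

definition is_tree :: "'a set \<Rightarrow> 'a set set \<Rightarrow> bool" where
  "is_tree V E \<longleftrightarrow> simple_graph V E \<and> V \<noteq> {} \<and> connected_graph V E \<and>
     (\<nexists>xs. is_cycle V E xs)"

definition gdist :: "'a set \<Rightarrow> 'a set set \<Rightarrow> 'a \<Rightarrow> 'a \<Rightarrow> nat" where
  "gdist V E a b = (LEAST n. \<exists>xs. is_path V E xs \<and> hd xs = a \<and> last xs = b \<and> length xs = Suc n)"

text \<open>d(o, pv) = min (d(o,p), d(o,v)).\<close>
definition vedist :: "'a set \<Rightarrow> 'a set set \<Rightarrow> 'a \<Rightarrow> 'a \<Rightarrow> 'a \<Rightarrow> nat" where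
  "vedist V E a p v = min (gdist V E a p) (gdist V E a v)"

text \<open>d(ou, pv) = min (d(o,pv), d(u,pv)).\<close>
definition eedist :: "'a set \<Rightarrow> 'a set set \<Rightarrow> 'a \<Rightarrow> 'a \<Rightarrow> 'a \<Rightarrow> 'a \<Rightarrow> nat" where
  "eedist V E a u p v = min (vedist V E a p v) (vedist V E u p v)"

definition is_matching :: "'a set set \<Rightarrow> 'a set set \<Rightarrow> bool" where
  "is_matching E D \<longleftrightarrow> D \<subseteq> E \<and> (\<forall>e\<in>D. \<forall>f\<in>D. e \<noteq> f \<longrightarrow> e \<inter> f = {})"

definition monomers :: "'a set \<Rightarrow> 'a set set \<Rightarrow> 'a set" where
  "monomers V D = V - \<Union>D"

definition md_weight :: "'a set \<Rightarrow> ('a \<Rightarrow> real) \<Rightarrow> ('a set \<Rightarrow> real) \<Rightarrow> 'a set set \<Rightarrow> real" where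
  "md_weight V x w D = (\<Prod>e\<in>D. w e) * (\<Prod>v\<in>monomers V D. x v)"

definition md_Z :: "'a set \<Rightarrow> 'a set set \<Rightarrow> ('a \<Rightarrow> real) \<Rightarrow> ('a set \<Rightarrow> real) \<Rightarrow> real" where
  "md_Z V E x w = (\<Sum>D\<in>{D. is_matching E D}. md_weight V x w D)"

text \<open>R(G,o): probability that o is a monomer.\<close>
definition md_R :: "'a set \<Rightarrow> 'a set set \<Rightarrow> ('a \<Rightarrow> real) \<Rightarrow> ('a set \<Rightarrow> real) \<Rightarrow> 'a \<Rightarrow> real" where
  "md_R V E x w a = (\<Sum>D\<in>{D. is_matching E D \<and> a \<in> monomers V D}. md_weight V x w D) / md_Z V E x w"

text \<open>E(G,e): probability that the edge e belongs to the dimer configuration.\<close>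
definition md_E :: "'a set \<Rightarrow> 'a set set \<Rightarrow> ('a \<Rightarrow> real) \<Rightarrow> ('a set \<Rightarrow> real) \<Rightarrow> 'a set \<Rightarrow> real" where
  "md_E V E x w e = (\<Sum>D\<in>{D. is_matching E D \<and> e \<in> D}. md_weight V x w D) / md_Z V E x w"

end

theory Submission
  imports Defs
begin

text \<open>Each derivative in the theorem is a quotient whose numerator is \<open>Z\<^sup>2\<close> times the
  covariance of two of the events ``\<open>a\<close> is a monomer'' and ``\<open>e\<close> is a dimer''. Deleting the
  prescribed monomers and dimers turns every such covariance into a negative multiple of a Rayleigh
  difference \<open>Z(U - S) Z(U - T) - Z(U) Z(U - S - T)\<close> of partition functions of vertex-deleted
  subgraphs. For \<open>S = {a}\<close> the recursion \<open>Z(U) = x\<^sub>a Z(U - a) + \<Sum>\<^sub>b w\<^sub>a\<^sub>b Z(U - a - b)\<close> expands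
  the Rayleigh difference over the neighbours \<open>b\<close> of \<open>a\<close>. In a tree, every neighbour off the
  shortest path from \<open>a\<close> to \<open>T\<close> contributes nothing, since \<open>Z\<close> then factorises over a component
  that cannot reach \<open>T\<close>, while the neighbour on that path contributes the Rayleigh difference one
  step closer to \<open>T\<close> with the opposite sign. So the sign alternates with the distance from \<open>a\<close>
  to \<open>T\<close>; for an edge \<open>S = ab\<close> it is governed by the endpoint nearer to \<open>T\<close>.\<close>

section \<open>Paths in graphs\<close>

lemma is_path_edge: "is_path U E xs \<Longrightarrow> Suc i < length xs \<Longrightarrow> {xs ! i, xs ! Suc i} \<in> E"
  by (simp add: is_path_def)

lemma is_path_set: "is_path U E xs \<Longrightarrow> set xs \<subseteq> U"
  by (simp add: is_path_def)

lemma is_path_subset: "is_path U E xs \<Longrightarrow> U \<subseteq> U' \<Longrightarrow> is_path U' E xs"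
  by (auto simp: is_path_def)

lemma is_path_singleton: "a \<in> U \<Longrightarrow> is_path U E [a]"
  by (simp add: is_path_def)

lemma is_path_take: "is_path U E xs \<Longrightarrow> 0 < k \<Longrightarrow> is_path U E (take k xs)"
  by (auto simp: is_path_def dest: in_set_takeD)

lemma is_path_drop:
  assumes "is_path U E xs" "k < length xs"
  shows "is_path U E (drop k xs)"
proof -
  have "{drop k xs ! i, drop k xs ! Suc i} \<in> E" if "Suc i < length (drop k xs)" for i
    using that assms(1) is_path_edge[of U E xs "k + i"] by simp
  then show ?thesis
    using assms by (auto simp: is_path_def dest: in_set_dropD)
qed

lemma is_path_append:
  assumes P: "is_path U E xs" and Q: "is_path U E ys" and disjoint: "set xs \<inter> set ys = {}"
    and link: "{last xs, hd ys} \<in> E"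
  shows "is_path U E (xs @ ys)"
proof -
  have xs: "xs \<noteq> []" and ys: "ys \<noteq> []" using P Q by (auto simp: is_path_def)
  have "{(xs @ ys) ! i, (xs @ ys) ! Suc i} \<in> E" if i: "Suc i < length (xs @ ys)" for i
  proof (cases "Suc i < length xs")
    case True
    then show ?thesis using P by (simp add: nth_append is_path_def)
  next
    case False
    consider "Suc i = length xs" | "length xs \<le> i" using False by linarith
    then show ?thesis
    proof cases
      case 1
      then have "i = length xs - 1" by simp
      then show ?thesis
        using 1 link xs ys by (simp add: nth_append last_conv_nth hd_conv_nth)
    next
      case 2
      then have "{ys ! (i - length xs), ys ! Suc (i - length xs)} \<in> E"
        using Q i by (intro is_path_edge) auto
      then show ?thesis using 2 by (simp add: nth_append Suc_diff_le)
    qed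
  qed
  then show ?thesis using P Q disjoint xs by (simp add: is_path_def)
qed

lemma is_path_rev:
  assumes "is_path U E xs"
  shows "is_path U E (rev xs)"
proof -
  have "{rev xs ! i, rev xs ! Suc i} \<in> E" if "Suc i < length (rev xs)" for i
  proof -
    let ?j = "length xs - Suc (Suc i)"
    have "{xs ! ?j, xs ! Suc ?j} \<in> E" using assms that by (intro is_path_edge) auto
    moreover have "rev xs ! i = xs ! Suc ?j" "rev xs ! Suc i = xs ! ?j"
      using that by (simp_all add: rev_nth Suc_diff_Suc)
    ultimately show ?thesis by (simp add: insert_commute)
  qed
  then show ?thesis using assms by (simp add: is_path_def)
qed

lemma is_path_snoc:
  assumes "is_path U E xs" "d \<in> U" "d \<notin> set xs" "{last xs, d} \<in> E"
  shows "is_path U E (xs @ [d])"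
  using is_path_append[OF assms(1) is_path_singleton[OF assms(2)]] assms by simp

lemma first_common_element:
  assumes "set xs \<inter> set ys \<noteq> {}"
  obtains i j where "i < length xs" "j < length ys" "xs ! i = ys ! j" "\<forall>k<i. xs ! k \<notin> set ys"
proof -
  have ex: "\<exists>i. i < length xs \<and> xs ! i \<in> set ys"
    using assms by (metis disjoint_iff in_set_conv_nth)
  define i where "i = (LEAST i. i < length xs \<and> xs ! i \<in> set ys)"
  have i: "i < length xs" "xs ! i \<in> set ys" using LeastI_ex[OF ex] unfolding i_def by auto
  have "xs ! k \<notin> set ys" if "k < i" for k
    using that i(1) not_less_Least[of k "\<lambda>i. i < length xs \<and> xs ! i \<in> set ys"] unfolding i_def by auto
  moreover obtain j where "j < length ys" "ys ! j = xs ! i" using i(2) by (metis in_set_conv_nth)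
  ultimately show ?thesis using that[OF i(1)] by simp
qed

lemma is_path_join_at_first_common:
  assumes P: "is_path U E P" and Q: "is_path U E Q"
    and ij: "i < length P" "0 < j" "j < length Q" "P ! i = Q ! j" and first: "\<forall>k<i. P ! k \<notin> set Q"
  shows "is_path U E (take (Suc i) P @ rev (take j Q))"
proof (rule is_path_append)
  show "is_path U E (take (Suc i) P)" using is_path_take[OF P] by simp
  show "is_path U E (rev (take j Q))" using is_path_rev[OF is_path_take[OF Q]] ij(2) by simp
  show "set (take (Suc i) P) \<inter> set (rev (take j Q)) = {}"
  proof (rule ccontr)
    assume "set (take (Suc i) P) \<inter> set (rev (take j Q)) \<noteq> {}"
    then obtain m k where mk: "m < Suc i" "k < j" "Q ! k = P ! m"
      using ij(1,3) by (auto simp: in_set_conv_nth)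
    show False
    proof (cases "m < i")
      case True
      then show False using first mk ij(3) by (metis less_trans nth_mem)
    next
      case False
      then have "Q ! k = Q ! j" using mk ij(4) by (simp add: less_Suc_eq)
      then show False using Q ij(3) mk(2) by (simp add: is_path_def nth_eq_iff_index_eq)
    qed
  qed
  have "take j Q = take (j - 1) Q @ [Q ! (j - 1)]"
    using ij(2,3) take_Suc_conv_app_nth[of "j - 1" Q] by simp
  then have "hd (rev (take j Q)) = Q ! (j - 1)" by simp
  moreover have "{Q ! (j - 1), Q ! j} \<in> E" using is_path_edge[OF Q, of "j - 1"] ij(2,3) by simp
  ultimately show "{last (take (Suc i) P), hd (rev (take j Q))} \<in> E"
    using ij(1,4) by (simp add: take_Suc_conv_app_nth insert_commute)
qed

lemma reachable_extend:
  assumes P: "is_path U E xs" "hd xs = a" "last xs = c" and d: "d \<in> U" "{c, d} \<in> E"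
  shows "\<exists>ys. is_path U E ys \<and> hd ys = a \<and> last ys = d"
proof (cases "d \<in> set xs")
  case True
  then obtain i where i: "i < length xs" "xs ! i = d" by (meson in_set_conv_nth)
  have "is_path U E (take (Suc i) xs)" using is_path_take[OF P(1)] by simp
  moreover have "hd (take (Suc i) xs) = a" using P(2) i by (simp add: hd_conv_nth)
  moreover have "last (take (Suc i) xs) = d" using i by (simp add: take_Suc_conv_app_nth)
  ultimately show ?thesis by blast
next
  case False
  have "xs \<noteq> []" using P by (simp add: is_path_def)
  then show ?thesis
    using is_path_snoc[OF P(1) d(1) False] d(2) P(2,3) by (intro exI[of _ "xs @ [d]"]) simp
qed

section \<open>Partition functions of vertex subsets\<close>

definition md_Zr :: "'a set set \<Rightarrow> ('a \<Rightarrow> real) \<Rightarrow> ('a set \<Rightarrow> real) \<Rightarrow> 'a set \<Rightarrow> ('a set set \<Rightarrow> bool) \<Rightarrow> real"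
  where "md_Zr E x w U P = (\<Sum>D\<in>{D. is_matching E D \<and> \<Union>D \<subseteq> U \<and> P D}. md_weight U x w D)"

locale finite_simple_graph =
  fixes V :: "'a set" and E :: "'a set set"
  assumes simple: "simple_graph V E"
begin

abbreviation Z :: "('a \<Rightarrow> real) \<Rightarrow> ('a set \<Rightarrow> real) \<Rightarrow> 'a set \<Rightarrow> real"
  where "Z x w U \<equiv> md_Zr E x w U (\<lambda>_. True)"

abbreviation neighbours_in :: "'a set \<Rightarrow> 'a \<Rightarrow> 'a set"
  where "neighbours_in U a \<equiv> {b \<in> U. {a, b} \<in> E}"

lemma finite_V: "finite V"
  using simple by (simp add: simple_graph_def)

lemma edge_doubleton: "e \<in> E \<Longrightarrow> \<exists>a b. a \<in> V \<and> b \<in> V \<and> a \<noteq> b \<and> e = {a, b}"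
  using simple by (simp add: simple_graph_def)

lemma edges_subset_Pow: "E \<subseteq> Pow V"
  using edge_doubleton by blast

lemma finite_E: "finite E"
  using edges_subset_Pow finite_V by (meson finite_Pow_iff finite_subset)

lemma edge_nonempty: "e \<in> E \<Longrightarrow> e \<noteq> {}"
  using edge_doubleton by blast

lemma edge_ends_distinct: "{a, b} \<in> E \<Longrightarrow> a \<noteq> b"
  using edge_doubleton by force

lemma finite_neighbours_in: "U \<subseteq> V \<Longrightarrow> finite (neighbours_in U a)"
  using finite_V by (simp add: finite_subset)

lemma finite_matchings: "finite {D. is_matching E D \<and> Q D}"
  by (rule finite_subset[of _ "Pow E"]) (auto simp: is_matching_def finite_E)

lemma matching_finite: "is_matching E D \<Longrightarrow> finite D"
  using finite_E by (auto simp: is_matching_def intro: finite_subset)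

lemma matching_Union_subset: "is_matching E D \<Longrightarrow> \<Union>D \<subseteq> V"
  using edges_subset_Pow by (auto simp: is_matching_def)

lemma matching_disjoint: "is_matching E D \<Longrightarrow> e \<in> D \<Longrightarrow> f \<in> D \<Longrightarrow> e \<noteq> f \<Longrightarrow> e \<inter> f = {}"
  by (simp add: is_matching_def)

lemma matching_Diff: "is_matching E D \<Longrightarrow> is_matching E (D - F)"
  by (auto simp: is_matching_def)

lemma matching_Un:
  assumes D: "is_matching E D" and F: "is_matching E F" and disjoint: "\<Union>D \<inter> \<Union>F = {}"
  shows "is_matching E (D \<union> F)"
  unfolding is_matching_def
proof (intro conjI ballI impI)
  show "D \<union> F \<subseteq> E" using D F by (auto simp: is_matching_def)
  fix e f assume ef: "e \<in> D \<union> F" "f \<in> D \<union> F" "e \<noteq> f"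
  consider "e \<in> D" "f \<in> D" | "e \<in> F" "f \<in> F" | "e \<inter> f \<subseteq> \<Union>D \<inter> \<Union>F"
    using ef(1,2) by blast
  then show "e \<inter> f = {}"
    by cases (use matching_disjoint[OF D] matching_disjoint[OF F] ef(3) disjoint in auto)
qed

lemma matching_Union_Diff_disjoint:
  assumes "is_matching E D" "F \<subseteq> D"
  shows "\<Union>(D - F) \<inter> \<Union>F = {}"
proof (rule equals0I)
  fix a assume "a \<in> \<Union>(D - F) \<inter> \<Union>F"
  then obtain e f where "e \<in> D - F" "f \<in> F" "a \<in> e" "a \<in> f" by blast
  moreover from this have "e \<inter> f = {}"
    using assms by (intro matching_disjoint[OF assms(1)]) auto
  ultimately show False by blast
qed

lemma disjoint_edge_sets:
  assumes "F \<subseteq> E" and "\<Union>D \<inter> \<Union>F = {}"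
  shows "D \<inter> F = {}"
proof (rule equals0I)
  fix e assume e: "e \<in> D \<inter> F"
  then have "e = {}" using assms(2) by blast
  with e assms(1) edge_nonempty show False by blast
qed

lemma md_Zr_split:
  "md_Zr E x w U P = md_Zr E x w U (\<lambda>D. P D \<and> Q D) + md_Zr E x w U (\<lambda>D. P D \<and> \<not> Q D)"
proof -
  have "{D. is_matching E D \<and> \<Union>D \<subseteq> U \<and> P D} =
      {D. is_matching E D \<and> \<Union>D \<subseteq> U \<and> P D \<and> Q D} \<union> {D. is_matching E D \<and> \<Union>D \<subseteq> U \<and> P D \<and> \<not> Q D}"
    by blast
  then show ?thesis
    unfolding md_Zr_def by (subst sum.union_disjoint[symmetric]) (auto intro: finite_matchings)
qed

lemma md_Zr_cong:
  "(\<And>D. is_matching E D \<Longrightarrow> \<Union>D \<subseteq> U \<Longrightarrow> P D = Q D) \<Longrightarrow> md_Zr E x w U P = md_Zr E x w U Q"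
  unfolding md_Zr_def by (rule sum.cong) auto

lemma md_Zr_eq_0: "(\<And>D. is_matching E D \<Longrightarrow> \<not> P D) \<Longrightarrow> md_Zr E x w U P = 0"
  unfolding md_Zr_def by (rule sum.neutral) auto

lemma md_weight_cong:
  assumes "\<And>a. a \<in> monomers U D \<Longrightarrow> x a = x' a" and "\<And>e. e \<in> D \<Longrightarrow> w e = w' e"
  shows "md_weight U x w D = md_weight U x' w' D"
  unfolding md_weight_def using assms by (simp cong: prod.cong)

lemma Z_empty: "Z x w {} = 1"
proof -
  have "D = {}" if "is_matching E D" "\<Union>D \<subseteq> {}" for D
  proof -
    have "D \<subseteq> E" using that(1) by (simp add: is_matching_def)
    then show "D = {}" using that(2) by (auto dest: edge_nonempty)
  qed
  then have "{D. is_matching E D \<and> \<Union>D \<subseteq> {} \<and> True} = {{}}"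
    by (auto simp: is_matching_def)
  then show ?thesis
    unfolding md_Zr_def by (simp add: md_weight_def monomers_def)
qed

lemma bij_betw_add_dimers:
  assumes F: "is_matching E F" and M: "M \<inter> \<Union>F = {}" and FU: "\<Union>F \<subseteq> U"
  shows "bij_betw (\<lambda>D. D \<union> F) {D. is_matching E D \<and> \<Union>D \<subseteq> U - M - \<Union>F}
           {D. is_matching E D \<and> \<Union>D \<subseteq> U \<and> M \<inter> \<Union>D = {} \<and> F \<subseteq> D}"
proof (rule bij_betw_byWitness[where f'="\<lambda>D. D - F"])
  have FE: "F \<subseteq> E" using F by (simp add: is_matching_def)
  show "\<forall>D\<in>{D. is_matching E D \<and> \<Union>D \<subseteq> U - M - \<Union>F}. D \<union> F - F = D"
  proof
    fix D assume "D \<in> {D. is_matching E D \<and> \<Union>D \<subseteq> U - M - \<Union>F}"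
    then have "D \<inter> F = {}" by (intro disjoint_edge_sets[OF FE]) blast
    then show "D \<union> F - F = D" by blast
  qed
  show "\<forall>D\<in>{D. is_matching E D \<and> \<Union>D \<subseteq> U \<and> M \<inter> \<Union>D = {} \<and> F \<subseteq> D}. D - F \<union> F = D"
    by blast
  show "(\<lambda>D. D \<union> F) ` {D. is_matching E D \<and> \<Union>D \<subseteq> U - M - \<Union>F}
      \<subseteq> {D. is_matching E D \<and> \<Union>D \<subseteq> U \<and> M \<inter> \<Union>D = {} \<and> F \<subseteq> D}"
  proof clarify
    fix D assume D: "is_matching E D" "\<Union>D \<subseteq> U - M - \<Union>F"
    then have "is_matching E (D \<union> F)" by (intro matching_Un[OF D(1) F]) blast
    then show "is_matching E (D \<union> F) \<and> \<Union>(D \<union> F) \<subseteq> U \<and> M \<inter> \<Union>(D \<union> F) = {} \<and> F \<subseteq> D \<union> F"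
      using D(2) FU M by blast
  qed
  show "(\<lambda>D. D - F) ` {D. is_matching E D \<and> \<Union>D \<subseteq> U \<and> M \<inter> \<Union>D = {} \<and> F \<subseteq> D}
      \<subseteq> {D. is_matching E D \<and> \<Union>D \<subseteq> U - M - \<Union>F}"
  proof clarify
    fix D assume D: "is_matching E D" "\<Union>D \<subseteq> U" "M \<inter> \<Union>D = {}" "F \<subseteq> D"
    have "\<Union>(D - F) \<subseteq> U - M - \<Union>F"
    proof
      fix a assume a: "a \<in> \<Union>(D - F)"
      then have "a \<in> \<Union>D" by blast
      moreover have "a \<notin> \<Union>F" using a matching_Union_Diff_disjoint[OF D(1,4)] by blast
      ultimately show "a \<in> U - M - \<Union>F" using D(2,3) by blast
    qed
    then show "is_matching E (D - F) \<and> \<Union>(D - F) \<subseteq> U - M - \<Union>F"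
      using matching_Diff[OF D(1)] by simp
  qed
qed

lemma md_weight_add_dimers:
  assumes F: "is_matching E F" and M: "M \<subseteq> U" "M \<inter> \<Union>F = {}" and U: "U \<subseteq> V"
    and D: "is_matching E D" "\<Union>D \<subseteq> U - M - \<Union>F"
  shows "md_weight U x w (D \<union> F) = prod x M * prod w F * md_weight (U - M - \<Union>F) x w D"
proof -
  have "D \<inter> F = {}"
    using F D(2) by (intro disjoint_edge_sets) (auto simp: is_matching_def)
  then have "prod w (D \<union> F) = prod w D * prod w F"
    using D(1) F by (simp add: prod.union_disjoint matching_finite)
  moreover have "monomers U (D \<union> F) = monomers (U - M - \<Union>F) D \<union> M"
    using D(2) M unfolding monomers_def by auto
  moreover have "finite (monomers (U - M - \<Union>F) D)" "finite M"
    unfolding monomers_def using U M finite_V by (auto intro: finite_subset)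
  moreover have "monomers (U - M - \<Union>F) D \<inter> M = {}"
    unfolding monomers_def by auto
  ultimately show ?thesis
    unfolding md_weight_def by (simp add: prod.union_disjoint)
qed

lemma md_Zr_remove:
  assumes U: "U \<subseteq> V" and M: "M \<subseteq> U" "M \<inter> \<Union>F = {}"
    and F: "is_matching E F" "\<Union>F \<subseteq> U"
  shows "md_Zr E x w U (\<lambda>D. M \<inter> \<Union>D = {} \<and> F \<subseteq> D) = prod x M * prod w F * Z x w (U - M - \<Union>F)"
proof -
  let ?S = "{D. is_matching E D \<and> \<Union>D \<subseteq> U - M - \<Union>F}"
  have "md_Zr E x w U (\<lambda>D. M \<inter> \<Union>D = {} \<and> F \<subseteq> D) = (\<Sum>D\<in>?S. md_weight U x w (D \<union> F))"
    using sum.reindex_bij_betw[OF bij_betw_add_dimers[OF F(1) M(2) F(2)], of "md_weight U x w"]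
    by (simp add: md_Zr_def)
  also have "\<dots> = (\<Sum>D\<in>?S. prod x M * prod w F * md_weight (U - M - \<Union>F) x w D)"
    using md_weight_add_dimers[OF F(1) M U] by (intro sum.cong) auto
  also have "\<dots> = prod x M * prod w F * Z x w (U - M - \<Union>F)"
    by (simp add: md_Zr_def sum_distrib_left)
  finally show ?thesis .
qed

lemma md_Zr_monomer:
  assumes "U \<subseteq> V" "a \<in> U"
  shows "md_Zr E x w U (\<lambda>D. a \<notin> \<Union>D) = x a * Z x w (U - {a})"
proof -
  have "md_Zr E x w U (\<lambda>D. a \<notin> \<Union>D) = md_Zr E x w U (\<lambda>D. {a} \<inter> \<Union>D = {} \<and> {} \<subseteq> D)"
    by (rule md_Zr_cong) auto
  also have "\<dots> = prod x {a} * prod w {} * Z x w (U - {a} - \<Union>{})"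
    by (rule md_Zr_remove) (use assms in \<open>auto simp: is_matching_def\<close>)
  finally show ?thesis by simp
qed

lemma md_Zr_dimer:
  assumes "U \<subseteq> V" "e \<in> E" "e \<subseteq> U"
  shows "md_Zr E x w U (\<lambda>D. e \<in> D) = w e * Z x w (U - e)"
proof -
  have "md_Zr E x w U (\<lambda>D. e \<in> D) = md_Zr E x w U (\<lambda>D. {} \<inter> \<Union>D = {} \<and> {e} \<subseteq> D)"
    by (rule md_Zr_cong) auto
  also have "\<dots> = prod x {} * prod w {e} * Z x w (U - {} - \<Union>{e})"
    by (rule md_Zr_remove) (use assms in \<open>auto simp: is_matching_def\<close>)
  finally show ?thesis by simp
qed

lemma md_Zr_two_monomers:
  assumes "a \<in> V" "b \<in> V" "a \<noteq> b"
  shows "md_Zr E x w V (\<lambda>D. a \<notin> \<Union>D \<and> b \<notin> \<Union>D) = x a * x b * Z x w (V - {a} - {b})"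
proof -
  have "md_Zr E x w V (\<lambda>D. a \<notin> \<Union>D \<and> b \<notin> \<Union>D) = md_Zr E x w V (\<lambda>D. {a, b} \<inter> \<Union>D = {} \<and> {} \<subseteq> D)"
    by (rule md_Zr_cong) auto
  also have "\<dots> = prod x {a, b} * prod w {} * Z x w (V - {a, b} - \<Union>{})"
    by (rule md_Zr_remove) (use assms in \<open>auto simp: is_matching_def\<close>)
  also have "V - {a, b} - \<Union>{} = V - {a} - {b}" by blast
  finally show ?thesis using assms(3) by simp
qed

lemma md_Zr_monomer_dimer:
  assumes "a \<in> V" "e \<in> E" "a \<notin> e"
  shows "md_Zr E x w V (\<lambda>D. a \<notin> \<Union>D \<and> e \<in> D) = x a * w e * Z x w (V - {a} - e)"
proof -
  have "md_Zr E x w V (\<lambda>D. a \<notin> \<Union>D \<and> e \<in> D) = md_Zr E x w V (\<lambda>D. {a} \<inter> \<Union>D = {} \<and> {e} \<subseteq> D)"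
    by (rule md_Zr_cong) auto
  also have "\<dots> = prod x {a} * prod w {e} * Z x w (V - {a} - \<Union>{e})"
    by (rule md_Zr_remove) (use assms edges_subset_Pow in \<open>auto simp: is_matching_def\<close>)
  finally show ?thesis by simp
qed

lemma md_Zr_two_dimers:
  assumes "f \<in> E" "e \<in> E" "f \<inter> e = {}"
  shows "md_Zr E x w V (\<lambda>D. f \<in> D \<and> e \<in> D) = w f * w e * Z x w (V - f - e)"
proof -
  have fe: "f \<noteq> e" using assms edge_nonempty by blast
  have "md_Zr E x w V (\<lambda>D. f \<in> D \<and> e \<in> D) = md_Zr E x w V (\<lambda>D. {} \<inter> \<Union>D = {} \<and> {f, e} \<subseteq> D)"
    by (rule md_Zr_cong) auto
  also have "\<dots> = prod x {} * prod w {f, e} * Z x w (V - {} - \<Union>{f, e})"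
    by (rule md_Zr_remove) (use assms fe edges_subset_Pow in \<open>auto simp: is_matching_def\<close>)
  also have "V - {} - \<Union>{f, e} = V - f - e" by blast
  finally show ?thesis using fe by simp
qed

lemma md_Zr_covered:
  assumes U: "U \<subseteq> V" and a: "a \<in> U"
  shows "md_Zr E x w U (\<lambda>D. a \<in> \<Union>D) = (\<Sum>b\<in>neighbours_in U a. md_Zr E x w U (\<lambda>D. {a, b} \<in> D))"
proof -
  let ?A = "\<lambda>b. {D. is_matching E D \<and> \<Union>D \<subseteq> U \<and> {a, b} \<in> D}"
  have cover: "{D. is_matching E D \<and> \<Union>D \<subseteq> U \<and> a \<in> \<Union>D} = (\<Union>b\<in>neighbours_in U a. ?A b)"
  proof (intro equalityI subsetI)
    fix D assume "D \<in> {D. is_matching E D \<and> \<Union>D \<subseteq> U \<and> a \<in> \<Union>D}"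
    then obtain e where D: "is_matching E D" "\<Union>D \<subseteq> U" and e: "e \<in> D" "a \<in> e" by blast
    have "e \<in> E" using D(1) e(1) by (auto simp: is_matching_def)
    then obtain b where "e = {a, b}" using e(2) edge_doubleton by blast
    then show "D \<in> (\<Union>b\<in>neighbours_in U a. ?A b)"
      using D e \<open>e \<in> E\<close> by blast
  qed blast
  have disjoint: "?A b \<inter> ?A c = {}" if "b \<in> neighbours_in U a" "c \<in> neighbours_in U a" "b \<noteq> c" for b c
  proof (rule equals0I)
    fix D assume "D \<in> ?A b \<inter> ?A c"
    then have "is_matching E D" "{a, b} \<in> D" "{a, c} \<in> D" by auto
    moreover have "{a, b} \<noteq> {a, c}" using that(3) by (auto simp: doubleton_eq_iff)
    ultimately have "{a, b} \<inter> {a, c} = {}" by (rule matching_disjoint)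
    then show False by blast
  qed
  have "md_Zr E x w U (\<lambda>D. a \<in> \<Union>D) = sum (md_weight U x w) (\<Union>b\<in>neighbours_in U a. ?A b)"
    unfolding md_Zr_def cover[symmetric] by simp
  also have "\<dots> = (\<Sum>b\<in>neighbours_in U a. sum (md_weight U x w) (?A b))"
    using disjoint by (intro sum.UNION_disjoint finite_neighbours_in[OF U] ballI finite_matchings) blast
  finally show ?thesis by (simp add: md_Zr_def)
qed

lemma Z_recursion:
  assumes "U \<subseteq> V" "a \<in> U"
  shows "Z x w U = x a * Z x w (U - {a}) + (\<Sum>b\<in>neighbours_in U a. w {a, b} * Z x w (U - {a, b}))"
proof -
  have "Z x w U = md_Zr E x w U (\<lambda>D. a \<notin> \<Union>D) + md_Zr E x w U (\<lambda>D. a \<in> \<Union>D)"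
    using md_Zr_split[of x w U "\<lambda>_. True" "\<lambda>D. a \<notin> \<Union>D"] by simp
  also have "md_Zr E x w U (\<lambda>D. a \<in> \<Union>D) = (\<Sum>b\<in>neighbours_in U a. w {a, b} * Z x w (U - {a, b}))"
    unfolding md_Zr_covered[OF assms] using assms by (intro sum.cong refl md_Zr_dimer) auto
  finally show ?thesis using md_Zr_monomer[OF assms] by simp
qed

text \<open>Induction on \<open>A\<close>: expand \<open>Z(A \<union> B)\<close> by \<open>Z_recursion\<close> at a vertex of \<open>A\<close>, all of whose
  neighbours lie in \<open>A\<close>.\<close>

lemma Z_disjoint_union:
  assumes "A \<union> B \<subseteq> V" "A \<inter> B = {}" "\<forall>a\<in>A. \<forall>b\<in>B. {a, b} \<notin> E"
  shows "Z x w (A \<union> B) = Z x w A * Z x w B"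
  using assms
proof (induction "card A" arbitrary: A rule: less_induct)
  case less
  have finA: "finite A" using less.prems(1) finite_V by (meson finite_subset le_sup_iff)
  show ?case
  proof (cases "A = {}")
    case True
    then show ?thesis by (simp add: Z_empty)
  next
    case False
    then obtain a where a: "a \<in> A" by blast
    have "{a, b} \<notin> E" if "b \<in> B" for b
      using less.prems(3) a that by blast
    then have N: "neighbours_in (A \<union> B) a = neighbours_in A a" by auto
    have IH: "Z x w (A \<union> B - C) = Z x w (A - C) * Z x w B" if "a \<in> C" "C \<subseteq> A" for C
    proof -
      have "card (A - C) < card A"
        using finA a that by (intro psubset_card_mono) auto
      then have "Z x w ((A - C) \<union> B) = Z x w (A - C) * Z x w B"
        by (rule less.hyps) (use less.prems in auto)
      moreover have "A \<union> B - C = (A - C) \<union> B" using less.prems(2) that a by blast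
      ultimately show ?thesis by simp
    qed
    have "Z x w (A \<union> B) = x a * Z x w (A \<union> B - {a}) + (\<Sum>b\<in>neighbours_in A a. w {a, b} * Z x w (A \<union> B - {a, b}))"
      using Z_recursion[of "A \<union> B" a x w] less.prems(1) a N by simp
    also have "\<dots> = (x a * Z x w (A - {a}) + (\<Sum>b\<in>neighbours_in A a. w {a, b} * Z x w (A - {a, b}))) * Z x w B"
    proof -
      have "(\<Sum>b\<in>neighbours_in A a. w {a, b} * Z x w (A \<union> B - {a, b}))
          = (\<Sum>b\<in>neighbours_in A a. w {a, b} * Z x w (A - {a, b})) * Z x w B"
        unfolding sum_distrib_right using a by (intro sum.cong refl) (simp add: IH)
      then show ?thesis using a by (simp add: IH algebra_simps)
    qed
    also have "\<dots> = Z x w A * Z x w B"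
      using Z_recursion[of A a x w] less.prems(1) a by simp
    finally show ?thesis .
  qed
qed

lemma md_Zr_vertex_weight_linear:
  assumes U: "U \<subseteq> V" and p: "p \<in> U" and xp: "x p \<noteq> 0"
  shows "md_Zr E (x(p := t)) w U P =
    t * (md_Zr E x w U (\<lambda>D. P D \<and> p \<notin> \<Union>D) / x p) + md_Zr E x w U (\<lambda>D. P D \<and> \<not> p \<notin> \<Union>D)"
proof -
  have "md_weight U (x(p := t)) w D = t * (md_weight U x w D / x p)" if "p \<notin> \<Union>D" for D
  proof -
    have finite: "finite (monomers U D)" using U finite_V by (simp add: monomers_def finite_subset)
    have p_mono: "p \<in> monomers U D" using p that by (simp add: monomers_def)
    have "prod (x(p := t)) (monomers U D - {p}) = prod x (monomers U D - {p})"
      by (rule prod.cong) auto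
    then show ?thesis
      using prod.remove[OF finite p_mono, of "x(p := t)"] prod.remove[OF finite p_mono, of x] xp
      unfolding md_weight_def by (simp add: field_simps)
  qed
  then have "md_Zr E (x(p := t)) w U (\<lambda>D. P D \<and> p \<notin> \<Union>D) = t * (md_Zr E x w U (\<lambda>D. P D \<and> p \<notin> \<Union>D) / x p)"
    unfolding md_Zr_def by (simp add: sum_distrib_left sum_divide_distrib)
  moreover have "md_Zr E (x(p := t)) w U (\<lambda>D. P D \<and> \<not> p \<notin> \<Union>D) = md_Zr E x w U (\<lambda>D. P D \<and> \<not> p \<notin> \<Union>D)"
    unfolding md_Zr_def by (intro sum.cong refl md_weight_cong) (auto simp: monomers_def)
  ultimately show ?thesis
    using md_Zr_split[of "x(p := t)" w U P "\<lambda>D. p \<notin> \<Union>D"] by simp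
qed

lemma md_Zr_edge_weight_linear:
  assumes we: "w e \<noteq> 0"
  shows "md_Zr E x (w(e := t)) U P =
    t * (md_Zr E x w U (\<lambda>D. P D \<and> e \<in> D) / w e) + md_Zr E x w U (\<lambda>D. P D \<and> e \<notin> D)"
proof -
  have "md_weight U x (w(e := t)) D = t * (md_weight U x w D / w e)" if "e \<in> D" "is_matching E D" for D
  proof -
    have finite: "finite D" using that(2) by (rule matching_finite)
    have "prod (w(e := t)) (D - {e}) = prod w (D - {e})"
      by (rule prod.cong) auto
    then show ?thesis
      using prod.remove[OF finite that(1), of "w(e := t)"] prod.remove[OF finite that(1), of w] we
      unfolding md_weight_def by (simp add: field_simps)
  qed
  then have "md_Zr E x (w(e := t)) U (\<lambda>D. P D \<and> e \<in> D) = t * (md_Zr E x w U (\<lambda>D. P D \<and> e \<in> D) / w e)"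
    unfolding md_Zr_def by (simp add: sum_distrib_left sum_divide_distrib)
  moreover have "md_Zr E x (w(e := t)) U (\<lambda>D. P D \<and> e \<notin> D) = md_Zr E x w U (\<lambda>D. P D \<and> e \<notin> D)"
    unfolding md_Zr_def by (intro sum.cong refl md_weight_cong) auto
  ultimately show ?thesis
    using md_Zr_split[of x "w(e := t)" U P "\<lambda>D. e \<in> D"] by simp
qed

lemma md_Z_eq: "md_Z V E x w = Z x w V"
  unfolding md_Z_def md_Zr_def using matching_Union_subset by (intro sum.cong) auto

lemma md_R_eq: "a \<in> V \<Longrightarrow> md_R V E x w a = md_Zr E x w V (\<lambda>D. a \<notin> \<Union>D) / Z x w V"
  unfolding md_R_def md_Z_eq md_Zr_def monomers_def using matching_Union_subset
  by (intro arg_cong2[where f = "(/)"] sum.cong) auto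

lemma md_E_eq: "md_E V E x w e = md_Zr E x w V (\<lambda>D. e \<in> D) / Z x w V"
  unfolding md_E_def md_Z_eq md_Zr_def using matching_Union_subset
  by (intro arg_cong2[where f = "(/)"] sum.cong) auto

definition rayleigh_diff :: "('a \<Rightarrow> real) \<Rightarrow> ('a set \<Rightarrow> real) \<Rightarrow> 'a set \<Rightarrow> 'a set \<Rightarrow> 'a set \<Rightarrow> real" where
  "rayleigh_diff x w U S T = Z x w (U - S) * Z x w (U - T) - Z x w U * Z x w (U - S - T)"

lemma rayleigh_diff_pair:
  "rayleigh_diff x w U {a, b} T * Z x w (U - {a})
    = Z x w (U - {a} - {b}) * rayleigh_diff x w U {a} T + Z x w U * rayleigh_diff x w (U - {a}) {b} T"
proof -
  have "U - {a, b} = U - {a} - {b}" "U - {a, b} - T = U - {a} - {b} - T" by blast+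
  then show ?thesis unfolding rayleigh_diff_def by (simp add: algebra_simps)
qed

text \<open>If \<open>T\<close> cannot be reached from \<open>a\<close> inside \<open>U\<close>, then \<open>Z\<close> factorises over the component of
  \<open>a\<close> and the rest of \<open>U\<close>, and the Rayleigh difference cancels.\<close>

lemma rayleigh_diff_unreachable:
  assumes U: "U \<subseteq> V" and a: "a \<in> U" and T: "T \<subseteq> U"
    and unreachable: "\<And>xs. is_path U E xs \<Longrightarrow> hd xs = a \<Longrightarrow> last xs \<notin> T"
  shows "rayleigh_diff x w U {a} T = 0"
proof -
  define C where "C = {c \<in> U. \<exists>xs. is_path U E xs \<and> hd xs = a \<and> last xs = c}"
  define B where "B = U - C"
  have aC: "a \<in> C" unfolding C_def using a is_path_singleton[OF a] by force
  have TB: "T \<subseteq> B" unfolding B_def C_def using unreachable T by blast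
  have CU: "C \<subseteq> U" unfolding C_def by blast
  have no_edge: "{c, d} \<notin> E" if "c \<in> C" "d \<in> B" for c d
  proof
    assume cd: "{c, d} \<in> E"
    obtain xs where "is_path U E xs" "hd xs = a" "last xs = c" using \<open>c \<in> C\<close> unfolding C_def by blast
    then have "\<exists>ys. is_path U E ys \<and> hd ys = a \<and> last ys = d"
      using \<open>d \<in> B\<close> cd unfolding B_def by (intro reachable_extend) auto
    then show False using \<open>d \<in> B\<close> unfolding B_def C_def by blast
  qed
  have split: "Z x w (C' \<union> B') = Z x w C' * Z x w B'" if "C' \<subseteq> C" "B' \<subseteq> B" for C' B'
    using that U CU no_edge unfolding B_def by (intro Z_disjoint_union) blast+
  have "U - {a} = (C - {a}) \<union> B" "U - T = C \<union> (B - T)" "U - {a} - T = (C - {a}) \<union> (B - T)" "U = C \<union> B"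
    using TB aC CU unfolding B_def by blast+
  then show ?thesis
    unfolding rayleigh_diff_def by (simp add: split Diff_subset)
qed

lemma rayleigh_diff_recursion:
  assumes U: "U \<subseteq> V" and a: "a \<in> U" "a \<notin> T"
  shows "rayleigh_diff x w U {a} T =
    - (\<Sum>b\<in>neighbours_in U a - T. w {a, b} * rayleigh_diff x w (U - {a}) {b} T)
    - (\<Sum>b\<in>neighbours_in U a \<inter> T. w {a, b} * Z x w (U - {a} - {b}) * Z x w (U - {a} - T))"
proof -
  let ?N = "neighbours_in U a"
  have Z_U: "Z x w U = x a * Z x w (U - {a}) + (\<Sum>b\<in>?N. w {a, b} * Z x w (U - {a} - {b}))"
    using Z_recursion[OF U a(1), of x w] by (simp add: Diff_insert2[symmetric])
  have "Z x w (U - T) = x a * Z x w (U - T - {a}) + (\<Sum>b\<in>neighbours_in (U - T) a. w {a, b} * Z x w (U - T - {a, b}))"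
    using U a by (intro Z_recursion) auto
  moreover have "neighbours_in (U - T) a = ?N - T" by blast
  moreover have "U - T - {a, b} = U - {a} - {b} - T" "U - T - {a} = U - {a} - T" for b by blast+
  ultimately have Z_UT: "Z x w (U - T) = x a * Z x w (U - {a} - T) + (\<Sum>b\<in>?N - T. w {a, b} * Z x w (U - {a} - {b} - T))"
    by simp
  have "(\<Sum>b\<in>?N. w {a, b} * Z x w (U - {a} - {b}))
      = (\<Sum>b\<in>?N - T. w {a, b} * Z x w (U - {a} - {b})) + (\<Sum>b\<in>?N \<inter> T. w {a, b} * Z x w (U - {a} - {b}))"
    using sum.Int_Diff[OF finite_neighbours_in[OF U], where B = T] by (simp add: add.commute)
  then show ?thesis
    unfolding rayleigh_diff_def Z_U Z_UT
    by (simp add: algebra_simps sum_distrib_left sum_distrib_right sum_subtractf sum_negf[symmetric])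
qed

end

section \<open>Derivatives as covariances\<close>

lemma deriv_linear_fraction:
  fixes a b c d t :: real
  assumes "t * c + d \<noteq> 0"
  shows "deriv (\<lambda>s. (s * a + b) / (s * c + d)) t = (a * d - b * c) / (t * c + d)\<^sup>2"
proof -
  have "((\<lambda>s. (s * a + b) / (s * c + d)) has_real_derivative (a * (t * c + d) - (t * a + b) * c) / (t * c + d)\<^sup>2) (at t)"
    by (rule derivative_eq_intros refl | use assms in \<open>simp add: power2_eq_square\<close>)+
  then show ?thesis
    by (simp add: DERIV_imp_deriv algebra_simps)
qed

locale md_graph = finite_simple_graph +
  fixes x :: "'a \<Rightarrow> real" and w :: "'a set \<Rightarrow> real"
  assumes x_pos: "\<forall>a\<in>V. x a > 0" and w_pos: "\<forall>e\<in>E. w e > 0"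
begin

lemma md_weight_pos: "U \<subseteq> V \<Longrightarrow> is_matching E D \<Longrightarrow> md_weight U x w D > 0"
  unfolding md_weight_def monomers_def is_matching_def
  using x_pos w_pos by (intro mult_pos_pos prod_pos) auto

lemma md_Zr_nonneg: "U \<subseteq> V \<Longrightarrow> md_Zr E x w U P \<ge> 0"
  unfolding md_Zr_def using md_weight_pos by (intro sum_nonneg) (simp add: less_imp_le)

lemma Z_pos: "U \<subseteq> V \<Longrightarrow> Z x w U > 0"
proof -
  assume U: "U \<subseteq> V"
  have empty: "is_matching E {}" by (simp add: is_matching_def)
  have "0 < md_weight U x w {}" by (rule md_weight_pos[OF U empty])
  also have "\<dots> \<le> Z x w U"
    unfolding md_Zr_def using empty U md_weight_pos
    by (intro member_le_sum finite_matchings) (simp_all add: less_imp_le)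
  finally show ?thesis .
qed

lemma md_Zr_le_Z: "U \<subseteq> V \<Longrightarrow> md_Zr E x w U P \<le> Z x w U"
  using md_Zr_split[of x w U "\<lambda>_. True" P] md_Zr_nonneg[of U "\<lambda>D. \<not> P D"] by simp

text \<open>\<open>md_cov P Q\<close> is \<open>Z\<^sup>2\<close> times the covariance of the events \<open>P\<close> and \<open>Q\<close> under the
  monomer-dimer measure.\<close>

definition md_cov :: "('a set set \<Rightarrow> bool) \<Rightarrow> ('a set set \<Rightarrow> bool) \<Rightarrow> real" where
  "md_cov P Q = md_Zr E x w V (\<lambda>D. P D \<and> Q D) * Z x w V - md_Zr E x w V P * md_Zr E x w V Q"

lemma md_cov_commute: "md_cov P Q = md_cov Q P"
  unfolding md_cov_def by (simp add: conj_commute mult.commute)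

lemma md_cov_self_nonneg: "md_cov P P \<ge> 0"
  unfolding md_cov_def using md_Zr_le_Z[of V P] md_Zr_nonneg[of V P] by (simp add: mult_left_mono)

lemma md_cov_exclusive_nonpos:
  assumes "\<And>D. is_matching E D \<Longrightarrow> \<not> (P D \<and> Q D)"
  shows "md_cov P Q \<le> 0"
proof -
  have "md_Zr E x w V (\<lambda>D. P D \<and> Q D) = 0" using assms by (rule md_Zr_eq_0)
  then show ?thesis
    unfolding md_cov_def using md_Zr_nonneg[of V P] md_Zr_nonneg[of V Q] by simp
qed

lemma md_cov_two_monomers:
  assumes "a \<in> V" "b \<in> V" "a \<noteq> b"
  shows "md_cov (\<lambda>D. a \<notin> \<Union>D) (\<lambda>D. b \<notin> \<Union>D) = - (x a * x b * rayleigh_diff x w V {a} {b})"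
  unfolding md_cov_def rayleigh_diff_def md_Zr_two_monomers[OF assms]
    md_Zr_monomer[OF order_refl assms(1)] md_Zr_monomer[OF order_refl assms(2)]
  by (simp add: algebra_simps)

lemma md_cov_monomer_dimer:
  assumes "a \<in> V" "e \<in> E" "a \<notin> e"
  shows "md_cov (\<lambda>D. a \<notin> \<Union>D) (\<lambda>D. e \<in> D) = - (x a * w e * rayleigh_diff x w V {a} e)"
proof -
  have "e \<subseteq> V" using edges_subset_Pow assms(2) by blast
  then show ?thesis
    unfolding md_cov_def rayleigh_diff_def md_Zr_monomer_dimer[OF assms]
      md_Zr_monomer[OF order_refl assms(1)] md_Zr_dimer[OF order_refl assms(2) \<open>e \<subseteq> V\<close>]
    by (simp add: algebra_simps)
qed

lemma md_cov_two_dimers: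
  assumes "f \<in> E" "e \<in> E" "f \<inter> e = {}"
  shows "md_cov (\<lambda>D. f \<in> D) (\<lambda>D. e \<in> D) = - (w f * w e * rayleigh_diff x w V f e)"
proof -
  have "f \<subseteq> V" "e \<subseteq> V" using edges_subset_Pow assms(1,2) by blast+
  then show ?thesis
    unfolding md_cov_def rayleigh_diff_def md_Zr_two_dimers[OF assms]
      md_Zr_dimer[OF order_refl assms(1) \<open>f \<subseteq> V\<close>] md_Zr_dimer[OF order_refl assms(2) \<open>e \<subseteq> V\<close>]
    by (simp add: algebra_simps)
qed

lemma deriv_vertex_weight_ratio:
  assumes p: "p \<in> V"
  shows "deriv (\<lambda>t. md_Zr E (x(p := t)) w V P / Z (x(p := t)) w V) (x p)
    = md_cov P (\<lambda>D. p \<notin> \<Union>D) / (x p * (Z x w V)\<^sup>2)"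
proof -
  define A B C D where "A = md_Zr E x w V (\<lambda>D. P D \<and> p \<notin> \<Union>D)" and "B = md_Zr E x w V (\<lambda>D. P D \<and> \<not> p \<notin> \<Union>D)"
    and "C = md_Zr E x w V (\<lambda>D. p \<notin> \<Union>D)" and "D = md_Zr E x w V (\<lambda>D. \<not> p \<notin> \<Union>D)"
  have xp: "x p > 0" using x_pos p by blast
  have Z: "Z x w V = C + D"
    unfolding C_def D_def using md_Zr_split[of x w V "\<lambda>_. True" "\<lambda>D. p \<notin> \<Union>D"] by simp
  have P: "md_Zr E x w V P = A + B"
    unfolding A_def B_def by (rule md_Zr_split)
  have f: "(\<lambda>t. md_Zr E (x(p := t)) w V P / Z (x(p := t)) w V) = (\<lambda>t. (t * (A / x p) + B) / (t * (C / x p) + D))"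
    unfolding A_def B_def C_def D_def using xp p
    by (simp add: md_Zr_vertex_weight_linear[of V p x _ w])
  have "deriv (\<lambda>t. md_Zr E (x(p := t)) w V P / Z (x(p := t)) w V) (x p)
      = (A / x p * D - B * (C / x p)) / (x p * (C / x p) + D)\<^sup>2"
    unfolding f by (rule deriv_linear_fraction) (use xp Z Z_pos[of V] in simp)
  also have "\<dots> = md_cov P (\<lambda>D. p \<notin> \<Union>D) / (x p * (Z x w V)\<^sup>2)"
    unfolding md_cov_def A_def[symmetric] C_def[symmetric] Z P using xp
    by (simp add: field_simps power2_eq_square)
  finally show ?thesis .
qed

lemma deriv_edge_weight_ratio:
  assumes e: "e \<in> E"
  shows "deriv (\<lambda>t. md_Zr E x (w(e := t)) V P / Z x (w(e := t)) V) (w e)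
    = md_cov P (\<lambda>D. e \<in> D) / (w e * (Z x w V)\<^sup>2)"
proof -
  define A B C D where "A = md_Zr E x w V (\<lambda>D. P D \<and> e \<in> D)" and "B = md_Zr E x w V (\<lambda>D. P D \<and> e \<notin> D)"
    and "C = md_Zr E x w V (\<lambda>D. e \<in> D)" and "D = md_Zr E x w V (\<lambda>D. e \<notin> D)"
  have we: "w e > 0" using w_pos e by blast
  have Z: "Z x w V = C + D"
    unfolding C_def D_def using md_Zr_split[of x w V "\<lambda>_. True" "\<lambda>D. e \<in> D"] by simp
  have P: "md_Zr E x w V P = A + B"
    unfolding A_def B_def by (rule md_Zr_split)
  have f: "(\<lambda>t. md_Zr E x (w(e := t)) V P / Z x (w(e := t)) V) = (\<lambda>t. (t * (A / w e) + B) / (t * (C / w e) + D))"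
    unfolding A_def B_def C_def D_def using we
    by (simp add: md_Zr_edge_weight_linear[of w e x _ V])
  have "deriv (\<lambda>t. md_Zr E x (w(e := t)) V P / Z x (w(e := t)) V) (w e)
      = (A / w e * D - B * (C / w e)) / (w e * (C / w e) + D)\<^sup>2"
    unfolding f by (rule deriv_linear_fraction) (use we Z Z_pos[of V] in simp)
  also have "\<dots> = md_cov P (\<lambda>D. e \<in> D) / (w e * (Z x w V)\<^sup>2)"
    unfolding md_cov_def A_def[symmetric] C_def[symmetric] Z P using we
    by (simp add: field_simps power2_eq_square)
  finally show ?thesis .
qed

lemma deriv_md_R_vertex_weight:
  assumes "a \<in> V" "p \<in> V"
  shows "deriv (\<lambda>t. md_R V E (x(p := t)) w a) (x p)
    = md_cov (\<lambda>D. a \<notin> \<Union>D) (\<lambda>D. p \<notin> \<Union>D) / (x p * (Z x w V)\<^sup>2)"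
  using deriv_vertex_weight_ratio[OF assms(2)] assms(1) by (simp add: md_R_eq)

lemma deriv_md_E_vertex_weight:
  assumes "p \<in> V"
  shows "deriv (\<lambda>t. md_E V E (x(p := t)) w e) (x p)
    = md_cov (\<lambda>D. e \<in> D) (\<lambda>D. p \<notin> \<Union>D) / (x p * (Z x w V)\<^sup>2)"
  using deriv_vertex_weight_ratio[OF assms] by (simp add: md_E_eq)

lemma deriv_md_R_edge_weight:
  assumes "a \<in> V" "e \<in> E"
  shows "deriv (\<lambda>t. md_R V E x (w(e := t)) a) (w e)
    = md_cov (\<lambda>D. a \<notin> \<Union>D) (\<lambda>D. e \<in> D) / (w e * (Z x w V)\<^sup>2)"
  using deriv_edge_weight_ratio[OF assms(2)] assms(1) by (simp add: md_R_eq)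

lemma deriv_md_E_edge_weight:
  assumes "e \<in> E"
  shows "deriv (\<lambda>t. md_E V E x (w(e := t)) f) (w e)
    = md_cov (\<lambda>D. f \<in> D) (\<lambda>D. e \<in> D) / (w e * (Z x w V)\<^sup>2)"
  using deriv_edge_weight_ratio[OF assms] by (simp add: md_E_eq)

end

section \<open>Paths in trees\<close>

locale tree = finite_simple_graph +
  assumes tree: "is_tree V E"
begin

lemma no_cycle: "\<not> is_cycle V E xs"
  using tree by (auto simp: is_tree_def)

lemma connected: "connected_graph V E"
  using tree by (simp add: is_tree_def)

lemma path_between_edge_ends_short:
  assumes "{a, b} \<in> E" "is_path V E C" "hd C = a" "last C = b"
  shows "length C \<le> 2"
  using no_cycle[of C] assms by (auto simp: is_cycle_def insert_commute)

text \<open>A path leaving one end of an edge not along that edge never meets a path from the other end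
  that avoids the first: joining them at their first common vertex would close a cycle.\<close>

lemma paths_from_edge_ends_disjoint:
  assumes ab: "{a, b} \<in> E" and P: "is_path V E P" "hd P = a" "2 \<le> length P" "P ! 1 \<noteq> b"
    and Q: "is_path V E Q" "hd Q = b" "a \<notin> set Q"
  shows "set P \<inter> set Q = {}"
proof (rule ccontr)
  assume "set P \<inter> set Q \<noteq> {}"
  then obtain i j where ij: "i < length P" "j < length Q" "P ! i = Q ! j" and first: "\<forall>k<i. P ! k \<notin> set Q"
    by (rule first_common_element)
  have "P ! 0 = a" using P(2,3) by (cases P) auto
  then have "i \<noteq> 0" using ij Q(3) by (metis nth_mem)
  have "last (take (Suc i) P) = P ! i" using ij(1) by (simp add: take_Suc_conv_app_nth)
  with P(2) have P_ends: "hd (take (Suc i) P) = a" "last (take (Suc i) P) = P ! i" by simp_all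
  show False
  proof (cases "j = 0")
    case True
    then have "P ! i = b" using ij Q(2) by (simp add: hd_conv_nth)
    then have "length (take (Suc i) P) \<le> 2"
      using is_path_take[OF P(1), of "Suc i"] P_ends by (intro path_between_edge_ends_short[OF ab]) auto
    then show False using \<open>i \<noteq> 0\<close> \<open>P ! i = b\<close> P(4) ij(1) by (cases "i = 1") auto
  next
    case False
    let ?C = "take (Suc i) P @ rev (take j Q)"
    have "is_path V E ?C"
      using False by (intro is_path_join_at_first_common[OF P(1) Q(1) ij(1) _ ij(2,3) first]) simp
    moreover have "hd ?C = a" using P_ends ij(1) by (cases P) auto
    moreover have "last ?C = b" using False Q(2) ij(2) by (cases Q; cases j) auto
    ultimately have "length ?C \<le> 2" by (rule path_between_edge_ends_short[OF ab])
    then show False using False \<open>i \<noteq> 0\<close> ij(1,2) by simp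
  qed
qed

definition is_clique :: "'a set \<Rightarrow> bool" where
  "is_clique T \<longleftrightarrow> (\<forall>t\<in>T. \<forall>t'\<in>T. t \<noteq> t' \<longrightarrow> {t, t'} \<in> E)"

lemma no_paths_from_edge_ends_to_clique:
  assumes T: "is_clique T" and ab: "{a, b} \<in> E"
    and P: "is_path V E P" "hd P = a" "last P \<in> T" "a \<notin> T" "P ! 1 \<noteq> b"
    and Q: "is_path V E Q" "hd Q = b" "last Q \<in> T" "a \<notin> set Q"
  shows False
proof -
  have "P \<noteq> []" using P(1) by (simp add: is_path_def)
  have "length P \<noteq> 1"
  proof
    assume "length P = 1"
    then have "last P = hd P" using \<open>P \<noteq> []\<close> by (simp add: hd_conv_nth last_conv_nth)
    then show False using P(2,3,4) by simp
  qed
  with \<open>P \<noteq> []\<close> have long: "2 \<le> length P" by (cases P) (auto simp: Suc_le_eq)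
  then have disjoint: "set P \<inter> set Q = {}"
    using paths_from_edge_ends_disjoint[OF ab P(1,2) _ P(5) Q(1,2,4)] by simp
  have "Q \<noteq> []" using Q(1) by (simp add: is_path_def)
  then have last_Q: "last Q \<in> set Q" "last Q \<in> V"
    using is_path_set[OF Q(1)] by auto
  have "last P \<in> set P" using \<open>P \<noteq> []\<close> by simp
  then have "last P \<noteq> last Q" "last Q \<notin> set P" using disjoint last_Q(1) by auto
  then have "is_path V E (P @ [last Q])"
    using T P(3) Q(3) last_Q(2) unfolding is_clique_def by (intro is_path_snoc[OF P(1)]) auto
  then have "set (P @ [last Q]) \<inter> set Q = {}"
    by (rule paths_from_edge_ends_disjoint[OF ab _ _ _ _ Q(1,2,4)])
      (use P(2,5) long \<open>P \<noteq> []\<close> in \<open>simp_all add: nth_append\<close>)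
  then show False using last_Q(1) by simp
qed

lemma rayleigh_diff_off_path_neighbour:
  assumes T: "is_clique T" and U: "U \<subseteq> V" "T \<subseteq> U"
    and P: "is_path U E (a # y # P)" "last (y # P) \<in> T" "a \<notin> T"
    and b: "b \<in> neighbours_in U a - T" "b \<noteq> y"
  shows "rayleigh_diff x w (U - {a}) {b} T = 0"
proof (rule rayleigh_diff_unreachable)
  show "U - {a} \<subseteq> V" "b \<in> U - {a}" "T \<subseteq> U - {a}"
    using U b P(3) edge_ends_distinct by auto
  fix xs assume xs: "is_path (U - {a}) E xs" "hd xs = b"
  show "last xs \<notin> T"
  proof
    assume "last xs \<in> T"
    moreover have "is_path V E xs" "a \<notin> set xs"
      using is_path_subset[OF xs(1)] U(1) is_path_set[OF xs(1)] by auto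
    moreover have "is_path V E (a # y # P)"
      using P(1) U(1) by (rule is_path_subset)
    ultimately show False
      using no_paths_from_edge_ends_to_clique[OF T, of a b "a # y # P" xs] xs(2) b P(2,3) by auto
  qed
qed

lemma no_neighbour_in_clique:
  assumes T: "is_clique T" and U: "U \<subseteq> V"
    and P: "is_path U E (a # y # P)" "last (y # P) \<in> T" "a \<notin> T" "y \<notin> T"
  shows "neighbours_in U a \<inter> T = {}"
proof (rule equals0I)
  fix b assume b: "b \<in> neighbours_in U a \<inter> T"
  have "is_path V E (a # y # P)"
    using P(1) U by (rule is_path_subset)
  moreover have "is_path V E [b]" "a \<notin> set [b]"
    using b U edge_ends_distinct by (auto intro: is_path_singleton)
  ultimately show False
    using no_paths_from_edge_ends_to_clique[OF T, of a b "a # y # P" "[b]"] b P(2,3,4) by auto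
qed

lemma rayleigh_diff_path_neighbours_sum:
  assumes T: "is_clique T" and U: "U \<subseteq> V" "T \<subseteq> U"
    and P: "is_path U E (a # y # P)" "last (y # P) \<in> T" "a \<notin> T"
  shows "(\<Sum>b\<in>neighbours_in U a - T. w {a, b} * rayleigh_diff x w (U - {a}) {b} T)
    = (if y \<in> T then 0 else w {a, y} * rayleigh_diff x w (U - {a}) {y} T)"
proof -
  have "(\<Sum>b\<in>neighbours_in U a - T. w {a, b} * rayleigh_diff x w (U - {a}) {b} T)
      = (\<Sum>b\<in>(neighbours_in U a - T) \<inter> {y}. w {a, b} * rayleigh_diff x w (U - {a}) {b} T)"
    using rayleigh_diff_off_path_neighbour[OF T U P] finite_neighbours_in[OF U(1)]
    by (intro sum.mono_neutral_right) auto
  moreover have "{a, y} \<in> E" "y \<in> U"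
    using is_path_edge[OF P(1), of 0] is_path_set[OF P(1)] by auto
  ultimately show ?thesis by auto
qed

lemma rayleigh_diff_path_step:
  assumes T: "is_clique T" and U: "U \<subseteq> V" "T \<subseteq> U"
    and P: "is_path U E (a # y # P)" "last (y # P) \<in> T" "a \<notin> T" "y \<notin> T"
  shows "rayleigh_diff x w U {a} T = - (w {a, y} * rayleigh_diff x w (U - {a}) {y} T)"
  using rayleigh_diff_recursion[OF U(1) _ P(3)] is_path_set[OF P(1)]
    rayleigh_diff_path_neighbours_sum[OF T U P(1-3)] no_neighbour_in_clique[OF T U(1) P] P(4)
  by simp

lemma gdist_le_path_length:
  assumes "is_path V E xs" "hd xs = a" "last xs = b"
  shows "gdist V E a b \<le> length xs - 1"
proof -
  have "xs \<noteq> []" using assms(1) by (simp add: is_path_def)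
  then have "\<exists>ys. is_path V E ys \<and> hd ys = a \<and> last ys = b \<and> length ys = Suc (length xs - 1)"
    using assms by (intro exI[of _ xs]) simp
  then show ?thesis unfolding gdist_def by (rule Least_le)
qed

lemma shortest_path_exists:
  assumes "a \<in> V" "b \<in> V"
  shows "\<exists>xs. is_path V E xs \<and> hd xs = a \<and> last xs = b \<and> length xs = Suc (gdist V E a b)"
proof -
  obtain xs where xs: "is_path V E xs" "hd xs = a" "last xs = b"
    using connected assms unfolding connected_graph_def by blast
  then have "xs \<noteq> []" by (simp add: is_path_def)
  with xs have "\<exists>n xs. is_path V E xs \<and> hd xs = a \<and> last xs = b \<and> length xs = Suc n"
    by (intro exI[of _ "length xs - 1"] exI[of _ xs]) simp
  then show ?thesis unfolding gdist_def by (rule LeastI_ex)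
qed

lemma gdist_self: "a \<in> V \<Longrightarrow> gdist V E a a = 0"
  using gdist_le_path_length[OF is_path_singleton, of a a a] by simp

lemma vedist_endpoint: "a \<in> V \<Longrightarrow> a \<in> {p, v} \<Longrightarrow> vedist V E a p v = 0"
  by (auto simp: vedist_def gdist_self)

lemma shortest_path_butlast:
  assumes P: "is_path V E P" "hd P = a" "length P = Suc (gdist V E a (last P))"
    and y: "y \<in> set (butlast P)"
  shows "gdist V E a y < gdist V E a (last P)"
proof -
  obtain k where k: "k < length P - 1" "P ! k = y"
    using y by (auto simp: in_set_conv_nth nth_butlast)
  have "is_path V E (take (Suc k) P)" using is_path_take[OF P(1)] by simp
  moreover have "hd (take (Suc k) P) = a" using P(2) by simp
  moreover have "last (take (Suc k) P) = y" using k by (simp add: take_Suc_conv_app_nth)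
  ultimately have "gdist V E a y \<le> k"
    using gdist_le_path_length k(1) by fastforce
  then show ?thesis using k(1) P(3) by simp
qed

lemma shortest_path_to_edge_ends:
  assumes "a \<in> V" "p \<in> V" "v \<in> V"
  shows "\<exists>P. is_path V E P \<and> hd P = a \<and> last P \<in> {p, v} \<and> (\<forall>y\<in>set (butlast P). y \<notin> {p, v})
    \<and> length P = Suc (vedist V E a p v)"
proof -
  obtain q where q: "q \<in> {p, v}" "gdist V E a q = vedist V E a p v"
    unfolding vedist_def by (metis insertCI min_def)
  then obtain P where P: "is_path V E P" "hd P = a" "last P = q" "length P = Suc (gdist V E a q)"
    using shortest_path_exists assms by blast
  have "y \<notin> {p, v}" if "y \<in> set (butlast P)" for y
  proof -
    have "gdist V E a y < gdist V E a q"
      using shortest_path_butlast[OF P(1,2) _ that] P(3,4) by simp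
    then show ?thesis using q(2) unfolding vedist_def by auto
  qed
  then show ?thesis using P q by (intro exI[of _ P]) simp
qed

end

section \<open>Signs of Rayleigh differences\<close>

lemma sign_by_parity:
  fixes c r :: real
  assumes "(-1) ^ n * r \<ge> 0" "c > 0"
  shows "(odd n \<longrightarrow> - (c * r) \<ge> 0) \<and> (even n \<longrightarrow> - (c * r) \<le> 0)"
  using assms by (cases "even n") (simp_all add: mult_nonneg_nonpos)

locale md_tree = md_graph + tree
begin

lemma rayleigh_diff_path_last_step:
  assumes T: "is_clique T" and U: "U \<subseteq> V" "T \<subseteq> U"
    and P: "is_path U E (a # y # P)" "last (y # P) \<in> T" "a \<notin> T" "y \<in> T"
  shows "rayleigh_diff x w U {a} T \<le> 0"
proof -
  have "0 \<le> (\<Sum>b\<in>neighbours_in U a \<inter> T. w {a, b} * Z x w (U - {a} - {b}) * Z x w (U - {a} - T))"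
    using w_pos U(1) by (intro sum_nonneg mult_nonneg_nonneg md_Zr_nonneg) (auto intro: less_imp_le)
  then show ?thesis
    using rayleigh_diff_recursion[OF U(1) _ P(3)] is_path_set[OF P(1)]
      rayleigh_diff_path_neighbours_sum[OF T U P(1-3)] P(4)
    by simp
qed

text \<open>Along a path from \<open>a\<close> that first meets the clique \<open>T\<close> at its end, each step of the
  recursion for the Rayleigh difference keeps exactly one term and flips the sign.\<close>

lemma rayleigh_diff_sign_along_path:
  assumes T: "is_clique T"
  shows "is_path U E P \<Longrightarrow> U \<subseteq> V \<Longrightarrow> T \<subseteq> U \<Longrightarrow> hd P = a \<Longrightarrow> last P \<in> T \<Longrightarrow> a \<notin> T \<Longrightarrow>
    \<forall>y\<in>set (butlast P). y \<notin> T \<Longrightarrow> (-1) ^ (length P - 1) * rayleigh_diff x w U {a} T \<ge> 0"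
proof (induction P arbitrary: U a)
  case Nil
  then show ?case by (simp add: is_path_def)
next
  case (Cons a' P)
  then obtain y P' where P: "P = y # P'" by (cases P) auto
  have path: "is_path U E (a # y # P')" "last (y # P') \<in> T" "a \<notin> T"
    using Cons.prems P by auto
  show ?case
  proof (cases "y \<in> T")
    case True
    then have "P' = []" using Cons.prems(7) P by (cases P') auto
    then show ?thesis
      using rayleigh_diff_path_last_step[OF T Cons.prems(2,3) path True] P by simp
  next
    case False
    have "(-1) ^ (length P - 1) * rayleigh_diff x w (U - {a}) {y} T \<ge> 0"
    proof (rule Cons.IH)
      show "is_path (U - {a}) E P"
        using is_path_drop[OF path(1), of 1] is_path_set[OF path(1)] path(1) P
        by (auto simp: is_path_def)
      show "\<forall>z\<in>set (butlast P). z \<notin> T" using Cons.prems(7) P by (cases P') auto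
    qed (use Cons.prems P False in auto)
    moreover have "w {a, y} > 0"
      using w_pos is_path_edge[OF path(1), of 0] by simp
    moreover have "(-1) ^ (length (a' # P) - 1) * rayleigh_diff x w U {a} T
        = w {a, y} * ((-1) ^ (length P - 1) * rayleigh_diff x w (U - {a}) {y} T)"
      using rayleigh_diff_path_step[OF T Cons.prems(2,3) path False] P by simp
    ultimately show ?thesis by simp
  qed
qed

lemma rayleigh_diff_vertex_sign:
  assumes "a \<in> V" "p \<in> V" "v \<in> V" "a \<notin> {p, v}" "p = v \<or> {p, v} \<in> E"
  shows "(-1) ^ vedist V E a p v * rayleigh_diff x w V {a} {p, v} \<ge> 0"
proof -
  obtain P where P: "is_path V E P" "hd P = a" "last P \<in> {p, v}" "\<forall>y\<in>set (butlast P). y \<notin> {p, v}"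
    "length P = Suc (vedist V E a p v)"
    using shortest_path_to_edge_ends[OF assms(1-3)] by blast
  have "is_clique {p, v}"
    using assms(5) unfolding is_clique_def by (auto simp: insert_commute)
  then have "(-1) ^ (length P - 1) * rayleigh_diff x w V {a} {p, v} \<ge> 0"
    using assms by (intro rayleigh_diff_sign_along_path P(1-4)) auto
  then show ?thesis using P(5) by simp
qed

text \<open>If \<open>a\<close> is the end of \<open>ab\<close> nearer to \<open>pv\<close>, the shortest path from \<open>a\<close> to \<open>pv\<close> avoids
  \<open>b\<close>, so the second term of \<open>rayleigh_diff_pair\<close> vanishes.\<close>

lemma rayleigh_diff_edges_sign_nearer:
  assumes ab: "{a, b} \<in> E" and pv: "{p, v} \<in> E" and disjoint: "{a, b} \<inter> {p, v} = {}"
    and nearer: "vedist V E a p v \<le> vedist V E b p v"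
  shows "(-1) ^ vedist V E a p v * rayleigh_diff x w V {a, b} {p, v} \<ge> 0"
proof -
  have V: "a \<in> V" "b \<in> V" "p \<in> V" "v \<in> V" using ab pv edges_subset_Pow by blast+
  define d where "d = vedist V E a p v"
  obtain P where P: "is_path V E P" "hd P = a" "last P \<in> {p, v}" "length P = Suc d"
    using shortest_path_to_edge_ends[OF V(1,3,4)] unfolding d_def by blast
  have "d \<noteq> 0"
  proof
    assume "d = 0"
    then have "P = [a]" using P(2,4) by (cases P) auto
    then show False using P(3) disjoint by auto
  qed
  then obtain y P' where P_eq: "P = a # y # P'"
    using P(2,4) by (cases P; cases "tl P") auto
  have "y \<noteq> b"
  proof
    assume "y = b"
    then have "gdist V E b (last P) \<le> d - 1"
      using gdist_le_path_length[of "y # P'" b "last P"] is_path_drop[OF P(1), of 1] P(4) P_eq by simp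
    moreover have "vedist V E b p v \<le> gdist V E b (last P)" using P(3) by (auto simp: vedist_def)
    ultimately show False using nearer \<open>d \<noteq> 0\<close> unfolding d_def by simp
  qed
  have "is_clique {p, v}" using pv unfolding is_clique_def by (auto simp: insert_commute)
  then have "rayleigh_diff x w (V - {a}) {b} {p, v} = 0"
    using P P_eq \<open>y \<noteq> b\<close> ab V disjoint
    by (intro rayleigh_diff_off_path_neighbour[where y = y and P = P']) auto
  then have "(-1) ^ d * rayleigh_diff x w V {a, b} {p, v} * Z x w (V - {a})
      = Z x w (V - {a} - {b}) * ((-1) ^ d * rayleigh_diff x w V {a} {p, v})"
    using rayleigh_diff_pair[of x w V a b "{p, v}"] by simp
  moreover have "(-1) ^ d * rayleigh_diff x w V {a} {p, v} \<ge> 0"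
    using rayleigh_diff_vertex_sign[OF V(1,3,4)] pv disjoint unfolding d_def by blast
  moreover have "Z x w (V - {a}) > 0" "Z x w (V - {a} - {b}) \<ge> 0"
    by (auto intro: Z_pos md_Zr_nonneg)
  ultimately show ?thesis
    unfolding d_def[symmetric] by (metis zero_le_mult_iff not_le mult_nonneg_nonneg)
qed

lemma rayleigh_diff_edges_sign:
  assumes "{a, b} \<in> E" "{p, v} \<in> E" "{a, b} \<inter> {p, v} = {}"
  shows "(-1) ^ eedist V E a b p v * rayleigh_diff x w V {a, b} {p, v} \<ge> 0"
proof (cases "vedist V E a p v \<le> vedist V E b p v")
  case True
  then show ?thesis
    using rayleigh_diff_edges_sign_nearer[OF assms] by (simp add: eedist_def)
next
  case False
  then show ?thesis
    using rayleigh_diff_edges_sign_nearer[of b a p v] assms by (simp add: eedist_def insert_commute)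
qed

lemma md_cov_monomers_sign:
  assumes "a \<in> V" "p \<in> V"
  shows "(a = p \<or> odd (gdist V E a p) \<longrightarrow> md_cov (\<lambda>D. a \<notin> \<Union>D) (\<lambda>D. p \<notin> \<Union>D) \<ge> 0) \<and>
    (a \<noteq> p \<and> even (gdist V E a p) \<longrightarrow> md_cov (\<lambda>D. a \<notin> \<Union>D) (\<lambda>D. p \<notin> \<Union>D) \<le> 0)"
proof (cases "a = p")
  case True
  then show ?thesis using md_cov_self_nonneg by simp
next
  case False
  have "(-1) ^ gdist V E a p * rayleigh_diff x w V {a} {p} \<ge> 0"
    using rayleigh_diff_vertex_sign[OF assms(1,2,2)] False by (simp add: vedist_def)
  moreover have "x a * x p > 0" using x_pos assms by simp
  ultimately show ?thesis
    using sign_by_parity md_cov_two_monomers[OF assms False] False by metis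
qed

lemma md_cov_monomer_dimer_sign:
  assumes "a \<in> V" "{p, v} \<in> E"
  shows "(even (vedist V E a p v) \<longrightarrow> md_cov (\<lambda>D. a \<notin> \<Union>D) (\<lambda>D. {p, v} \<in> D) \<le> 0) \<and>
    (odd (vedist V E a p v) \<longrightarrow> md_cov (\<lambda>D. a \<notin> \<Union>D) (\<lambda>D. {p, v} \<in> D) \<ge> 0)"
proof (cases "a \<in> {p, v}")
  case True
  then have "md_cov (\<lambda>D. a \<notin> \<Union>D) (\<lambda>D. {p, v} \<in> D) \<le> 0"
    by (intro md_cov_exclusive_nonpos) blast
  then show ?thesis using vedist_endpoint[OF assms(1) True] by simp
next
  case False
  have "p \<in> V" "v \<in> V" using assms(2) edges_subset_Pow by blast+
  then have "(-1) ^ vedist V E a p v * rayleigh_diff x w V {a} {p, v} \<ge> 0"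
    using rayleigh_diff_vertex_sign[OF assms(1)] False assms(2) by blast
  moreover have "x a * w {p, v} > 0" using x_pos w_pos assms by simp
  ultimately show ?thesis
    using sign_by_parity md_cov_monomer_dimer[OF assms False] by metis
qed

lemma md_cov_dimers_sign:
  assumes "{a, b} \<in> E" "{p, v} \<in> E"
  shows "({a, b} = {p, v} \<or> odd (eedist V E a b p v) \<longrightarrow> md_cov (\<lambda>D. {a, b} \<in> D) (\<lambda>D. {p, v} \<in> D) \<ge> 0) \<and>
    ({a, b} \<noteq> {p, v} \<and> even (eedist V E a b p v) \<longrightarrow> md_cov (\<lambda>D. {a, b} \<in> D) (\<lambda>D. {p, v} \<in> D) \<le> 0)"
proof -
  consider "{a, b} = {p, v}" | "{a, b} \<noteq> {p, v}" "{a, b} \<inter> {p, v} \<noteq> {}" | "{a, b} \<inter> {p, v} = {}"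
    by blast
  then show ?thesis
  proof cases
    case 1
    then show ?thesis using md_cov_self_nonneg by simp
  next
    case 2
    have "md_cov (\<lambda>D. {a, b} \<in> D) (\<lambda>D. {p, v} \<in> D) \<le> 0"
      using 2 matching_disjoint by (intro md_cov_exclusive_nonpos) blast
    moreover have "eedist V E a b p v = 0"
      using 2 vedist_endpoint[of a p v] vedist_endpoint[of b p v] assms(1) edges_subset_Pow
      unfolding eedist_def by auto
    ultimately show ?thesis using 2 by simp
  next
    case 3
    have "w {a, b} * w {p, v} > 0" using w_pos assms by simp
    moreover have "{a, b} \<noteq> {p, v}" using 3 by blast
    ultimately show ?thesis
      using sign_by_parity[OF rayleigh_diff_edges_sign[OF assms 3]] md_cov_two_dimers[OF assms 3] by simp
  qed
qed

lemma deriv_md_R_vertex_weight_sign: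
  assumes "a \<in> V" "p \<in> V"
  shows "(a = p \<or> odd (gdist V E a p) \<longrightarrow> deriv (\<lambda>t. md_R V E (x(p := t)) w a) (x p) \<ge> 0) \<and>
    (a \<noteq> p \<and> even (gdist V E a p) \<longrightarrow> deriv (\<lambda>t. md_R V E (x(p := t)) w a) (x p) \<le> 0)"
proof -
  have "x p * (Z x w V)\<^sup>2 > 0" using x_pos assms(2) Z_pos[of V] by simp
  then show ?thesis
    using md_cov_monomers_sign[OF assms] unfolding deriv_md_R_vertex_weight[OF assms]
    by (auto intro: divide_nonneg_pos divide_nonpos_pos)
qed

lemma deriv_md_E_edge_weight_sign:
  assumes "{a, b} \<in> E" "{p, v} \<in> E"
  shows "({a, b} = {p, v} \<or> odd (eedist V E a b p v) \<longrightarrow>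
      deriv (\<lambda>t. md_E V E x (w({p, v} := t)) {a, b}) (w {p, v}) \<ge> 0) \<and>
    ({a, b} \<noteq> {p, v} \<and> even (eedist V E a b p v) \<longrightarrow>
      deriv (\<lambda>t. md_E V E x (w({p, v} := t)) {a, b}) (w {p, v}) \<le> 0)"
proof -
  have "w {p, v} * (Z x w V)\<^sup>2 > 0" using w_pos assms(2) Z_pos[of V] by simp
  then show ?thesis
    using md_cov_dimers_sign[OF assms] unfolding deriv_md_E_edge_weight[OF assms(2)]
    by (auto intro: divide_nonneg_pos divide_nonpos_pos)
qed

lemma md_R_edge_weight_deriv_reciprocity:
  assumes "a \<in> V" "e \<in> E"
  shows "w e * deriv (\<lambda>t. md_R V E x (w(e := t)) a) (w e) = x a * deriv (\<lambda>t. md_E V E (x(a := t)) w e) (x a)"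
proof -
  have "w e > 0" "x a > 0" using x_pos w_pos assms by auto
  then show ?thesis
    unfolding deriv_md_R_edge_weight[OF assms] deriv_md_E_vertex_weight[OF assms(1)]
    by (simp add: md_cov_commute)
qed

lemma md_R_edge_weight_deriv_sign:
  assumes "a \<in> V" "{p, v} \<in> E"
  shows "(even (vedist V E a p v) \<longrightarrow> w {p, v} * deriv (\<lambda>t. md_R V E x (w({p, v} := t)) a) (w {p, v}) \<le> 0) \<and>
    (odd (vedist V E a p v) \<longrightarrow> w {p, v} * deriv (\<lambda>t. md_R V E x (w({p, v} := t)) a) (w {p, v}) \<ge> 0)"
proof -
  have "w {p, v} > 0" "(Z x w V)\<^sup>2 > 0" using w_pos assms(2) Z_pos[of V] by auto
  then show ?thesis
    using md_cov_monomer_dimer_sign[OF assms] unfolding deriv_md_R_edge_weight[OF assms]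
    by (auto intro: divide_nonneg_pos divide_nonpos_pos)
qed

end

theorem proposition5p1:
  fixes V :: "'a set" and E :: "'a set set"
    and x :: "'a \<Rightarrow> real" and w :: "'a set \<Rightarrow> real"
    and o\<^sub>0 u p v :: 'a
  assumes tree: "is_tree V E"
    and xpos: "\<forall>a\<in>V. x a > 0"
    and wpos: "\<forall>e\<in>E. w e > 0"
    and oV: "o\<^sub>0 \<in> V" and pV: "p \<in> V"
    and ou: "{o\<^sub>0, u} \<in> E" and pv: "{p, v} \<in> E"
  shows
    "(o\<^sub>0 = p \<or> odd (gdist V E o\<^sub>0 p) \<longrightarrow>
        deriv (\<lambda>t. md_R V E (x(p := t)) w o\<^sub>0) (x p) \<ge> 0) \<and>
     (o\<^sub>0 \<noteq> p \<and> even (gdist V E o\<^sub>0 p) \<longrightarrow>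
        deriv (\<lambda>t. md_R V E (x(p := t)) w o\<^sub>0) (x p) \<le> 0) \<and>
     ({o\<^sub>0, u} = {p, v} \<or> odd (eedist V E o\<^sub>0 u p v) \<longrightarrow>
        deriv (\<lambda>t. md_E V E x (w({p, v} := t)) {o\<^sub>0, u}) (w {p, v}) \<ge> 0) \<and>
     ({o\<^sub>0, u} \<noteq> {p, v} \<and> even (eedist V E o\<^sub>0 u p v) \<longrightarrow>
        deriv (\<lambda>t. md_E V E x (w({p, v} := t)) {o\<^sub>0, u}) (w {p, v}) \<le> 0) \<and>
     w {p, v} * deriv (\<lambda>t. md_R V E x (w({p, v} := t)) o\<^sub>0) (w {p, v})
       = x o\<^sub>0 * deriv (\<lambda>t. md_E V E (x(o\<^sub>0 := t)) w {p, v}) (x o\<^sub>0) \<and>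
     (even (vedist V E o\<^sub>0 p v) \<longrightarrow>
        w {p, v} * deriv (\<lambda>t. md_R V E x (w({p, v} := t)) o\<^sub>0) (w {p, v}) \<le> 0) \<and>
     (odd (vedist V E o\<^sub>0 p v) \<longrightarrow>
        w {p, v} * deriv (\<lambda>t. md_R V E x (w({p, v} := t)) o\<^sub>0) (w {p, v}) \<ge> 0)"
proof -
  interpret md_tree V E x w
    using tree xpos wpos by unfold_locales (auto simp: is_tree_def)
  show ?thesis
    using deriv_md_R_vertex_weight_sign[OF oV pV] deriv_md_E_edge_weight_sign[OF ou pv]
      md_R_edge_weight_deriv_reciprocity[OF oV pv] md_R_edge_weight_deriv_sign[OF oV pv]
    by blast
qed

end
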